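(* Let $\mathcal{N}=(N,M_0)$ be a two-level PT-net system with transitions partitioned into low-level $L$ and high-level $H$. Then $\mathcal{N}$ has the property SBNDC if and only if for every reachable marking $M_1$ of $\mathcal{N}$ and every $h\in H$, $M_1[h\rangle M_2$ implies $\mathcal{L}(N\setminus H,M_1)=\mathcal{L}(N\setminus H,M_2)$.
   Context: A PT-net is $N=(P,T,F)$ with $P,T$ finite disjoint and $F:(P\times T)\cup(T\times P)\to\mathbb{N}$; markings $M:P\to\mathbb{N}$; $t$ enabled at $M$ ($M[t\rangle$) iff $M(p)\ge F(p,t)$ for all $p$, firing gives $M'(p)=M(p)+F(t,p)-F(p,t)$ ($M[t\rangle M'$); extended to sequences. Reachable markings are those $M$ with $M_0[s\rangle M$. $N\setminus H$ deletes the transitions of $H$. $\mathcal{L}(N\setminus H,M)$ is the set of all $s\in L^*$ with $M[s\rangle$ in $N\setminus H$. Two net systems all of whose transitions are observable are weakly bisimilar if there is a relation $R$ between their reachable markings containing the initial pair such that for $(M,M')\in R$ each step $M[t\rangle M''$ is matched by $M'[t\rangle M'''$ with $(M'',M''')\in R$, and symmetrically. SBNDC: for every reachable marking $M_1$ of $\mathcal{N}$ and every $h\in H$, $M_1[h\rangle M_2$ implies that $(N\setminus H,M_1)$ and $(N\setminus H,M_2)$ are weakly bisimilar. *)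

theory Defs
  imports Main
begin

text \<open>PT-nets N = (P,T,F). Places have type 'p, transitions type 't (so P and T
are automatically disjoint). F is split into its two halves F(p,t) and F(t,p).\<close>

record ('p,'t) ptnet =
  places :: "'p set"
  trans  :: "'t set"
  pre    :: "'p \<Rightarrow> 't \<Rightarrow> nat"
  post   :: "'t \<Rightarrow> 'p \<Rightarrow> nat"

type_synonym 'p marking = "'p \<Rightarrow> nat"

definition wf_net :: "('p,'t) ptnet \<Rightarrow> bool" where
  "wf_net N \<longleftrightarrow> finite (places N) \<and> finite (trans N)
     \<and> (\<forall>p t. (p \<notin> places N \<or> t \<notin> trans N) \<longrightarrow> pre N p t = 0 \<and> post N t p = 0)"

definition fire :: "('p,'t) ptnet \<Rightarrow> 'p marking \<Rightarrow> 't \<Rightarrow> 'p marking \<Rightarrow> bool" where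
  "fire N M t M' \<longleftrightarrow> t \<in> trans N \<and> (\<forall>p \<in> places N. pre N p t \<le> M p)
     \<and> M' = (\<lambda>p. M p + post N t p - pre N p t)"

inductive fire_seq :: "('p,'t) ptnet \<Rightarrow> 'p marking \<Rightarrow> 't list \<Rightarrow> 'p marking \<Rightarrow> bool" where
  Nil: "fire_seq N M [] M"
| Cons: "fire N M t M' \<Longrightarrow> fire_seq N M' s M'' \<Longrightarrow> fire_seq N M (t # s) M''"

definition reachable :: "('p,'t) ptnet \<Rightarrow> 'p marking \<Rightarrow> 'p marking \<Rightarrow> bool" where
  "reachable N M0 M \<longleftrightarrow> (\<exists>s. fire_seq N M0 s M)"

definition net_del :: "('p,'t) ptnet \<Rightarrow> 't set \<Rightarrow> ('p,'t) ptnet" where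
  "net_del N H = N\<lparr>trans := trans N - H\<rparr>"

definition lang :: "('p,'t) ptnet \<Rightarrow> 't set \<Rightarrow> 't set \<Rightarrow> 'p marking \<Rightarrow> 't list set" where
  "lang N L H M = {s. set s \<subseteq> L \<and> (\<exists>M'. fire_seq (net_del N H) M s M')}"

text \<open>Weak bisimilarity of net systems all of whose transitions are observable
  (hence matching is step-by-step), relating reachable markings.\<close>
definition weakly_bisimilar ::
  "('p,'t) ptnet \<Rightarrow> 'p marking \<Rightarrow> ('p,'t) ptnet \<Rightarrow> 'p marking \<Rightarrow> bool" where
  "weakly_bisimilar N1 M1 N2 M2 \<longleftrightarrow> (\<exists>R. (M1, M2) \<in> R \<and>
     (\<forall>(A, B) \<in> R. reachable N1 M1 A \<and> reachable N2 M2 B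
        \<and> (\<forall>t A'. fire N1 A t A' \<longrightarrow> (\<exists>B'. fire N2 B t B' \<and> (A', B') \<in> R))
        \<and> (\<forall>t B'. fire N2 B t B' \<longrightarrow> (\<exists>A'. fire N1 A t A' \<and> (A', B') \<in> R))))"

definition two_level :: "('p,'t) ptnet \<Rightarrow> 't set \<Rightarrow> 't set \<Rightarrow> bool" where
  "two_level N L H \<longleftrightarrow> L \<union> H = trans N \<and> L \<inter> H = {}"

definition SBNDC :: "('p,'t) ptnet \<Rightarrow> 'p marking \<Rightarrow> 't set \<Rightarrow> bool" where
  "SBNDC N M0 H \<longleftrightarrow> (\<forall>M1 h M2. reachable N M0 M1 \<and> h \<in> H \<and> fire N M1 h M2 \<longrightarrow>
      weakly_bisimilar (net_del N H) M1 (net_del N H) M2)"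

end

theory Submission
  imports Defs
begin

text \<open>Firing is deterministic, so when all transitions are observable weak bisimilarity
  collapses to trace equivalence: the markings reached from the two initial markings by the
  same firing sequence form a bisimulation as soon as both sides admit the same sequences.
  In a two-level net the transitions of \<open>N \ H\<close> are all low, so the traces of
  \<open>N \ H\<close> are exactly its low-level language, and SBNDC becomes the stated language
  condition.\<close>

lemma fire_deterministic: "fire N M t A \<Longrightarrow> fire N M t B \<Longrightarrow> A = B"
  by (simp add: fire_def)

lemma fire_seq_Nil_iff: "fire_seq N M [] M' \<longleftrightarrow> M' = M"
  by (auto intro: fire_seq.Nil elim: fire_seq.cases)

lemma fire_seq_Cons_iff: "fire_seq N M (t # s) M'' \<longleftrightarrow> (\<exists>M'. fire N M t M' \<and> fire_seq N M' s M'')"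
  by (auto intro: fire_seq.Cons elim: fire_seq.cases)

lemma fire_seq_deterministic: "fire_seq N M s A \<Longrightarrow> fire_seq N M s B \<Longrightarrow> A = B"
  by (induction s arbitrary: M) (auto simp: fire_seq_Nil_iff fire_seq_Cons_iff dest: fire_deterministic)

lemma fire_seq_append_iff:
  "fire_seq N M (s @ u) M'' \<longleftrightarrow> (\<exists>M'. fire_seq N M s M' \<and> fire_seq N M' u M'')"
  by (induction s arbitrary: M) (auto simp: fire_seq_Cons_iff fire_seq_Nil_iff)

lemma fire_seq_snoc_iff: "fire_seq N M (s @ [t]) M'' \<longleftrightarrow> (\<exists>M'. fire_seq N M s M' \<and> fire N M' t M'')"
  by (simp add: fire_seq_append_iff fire_seq_Cons_iff fire_seq_Nil_iff)

lemma fire_seq_set_subset_trans: "fire_seq N M s M' \<Longrightarrow> set s \<subseteq> trans N"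
  by (induction rule: fire_seq.induct) (auto simp: fire_def)

definition traces :: "('p,'t) ptnet \<Rightarrow> 'p marking \<Rightarrow> 't list set" where
  "traces N M = {s. \<exists>M'. fire_seq N M s M'}"

lemma Nil_in_traces [simp]: "[] \<in> traces N M"
  by (auto simp: traces_def intro: fire_seq.Nil)

lemma Cons_in_traces_iff: "t # s \<in> traces N M \<longleftrightarrow> (\<exists>M'. fire N M t M' \<and> s \<in> traces N M')"
  unfolding traces_def by (blast intro: fire_seq.Cons elim: fire_seq.cases)

lemma simulation_traces_subset:
  assumes sim: "\<And>A B t A'. (A, B) \<in> R \<Longrightarrow> fire N1 A t A' \<Longrightarrow> \<exists>B'. fire N2 B t B' \<and> (A', B') \<in> R"
    and "(A, B) \<in> R"
  shows "traces N1 A \<subseteq> traces N2 B"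
proof
  fix s assume "s \<in> traces N1 A"
  with \<open>(A, B) \<in> R\<close> show "s \<in> traces N2 B"
  proof (induction s arbitrary: A B)
    case Nil
    then show ?case by simp
  next
    case (Cons t s)
    then obtain A1 where "fire N1 A t A1" "s \<in> traces N1 A1"
      by (auto simp: Cons_in_traces_iff)
    with sim Cons.prems(1) obtain B1 where "fire N2 B t B1" "(A1, B1) \<in> R" by blast
    with Cons.IH \<open>s \<in> traces N1 A1\<close> show ?case
      by (auto simp: Cons_in_traces_iff)
  qed
qed

lemma weakly_bisimilar_imp_traces_eq:
  assumes "weakly_bisimilar N1 M1 N2 M2"
  shows "traces N1 M1 = traces N2 M2"
proof -
  from assms obtain R where "(M1, M2) \<in> R"
    and fwd: "\<And>A B t A'. (A, B) \<in> R \<Longrightarrow> fire N1 A t A' \<Longrightarrow> \<exists>B'. fire N2 B t B' \<and> (A', B') \<in> R"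
    and bwd: "\<And>A B t B'. (A, B) \<in> R \<Longrightarrow> fire N2 B t B' \<Longrightarrow> \<exists>A'. fire N1 A t A' \<and> (A', B') \<in> R"
    unfolding weakly_bisimilar_def by (auto simp: Ball_def split_paired_all)
  have "traces N1 M1 \<subseteq> traces N2 M2"
    using fwd \<open>(M1, M2) \<in> R\<close> by (rule simulation_traces_subset)
  moreover have "traces N2 M2 \<subseteq> traces N1 M1"
    using simulation_traces_subset[of "R\<inverse>" N2 N1] bwd \<open>(M1, M2) \<in> R\<close> by blast
  ultimately show ?thesis by blast
qed

lemma step_matched_by_trace_inclusion:
  assumes "traces N1 M1 \<subseteq> traces N2 M2"
    and A: "fire_seq N1 M1 s A" and B: "fire_seq N2 M2 s B" and "fire N1 A t A'"
  obtains B' where "fire N2 B t B'" "fire_seq N1 M1 (s @ [t]) A'" "fire_seq N2 M2 (s @ [t]) B'"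
proof -
  have A': "fire_seq N1 M1 (s @ [t]) A'"
    using A \<open>fire N1 A t A'\<close> by (auto simp: fire_seq_snoc_iff)
  with assms(1) obtain B' where B': "fire_seq N2 M2 (s @ [t]) B'"
    by (auto simp: traces_def)
  then obtain B1 where "fire_seq N2 M2 s B1" "fire N2 B1 t B'"
    by (auto simp: fire_seq_snoc_iff)
  with B have "fire N2 B t B'" using fire_seq_deterministic by metis
  with A' B' that show ?thesis by blast
qed

lemma traces_eq_imp_weakly_bisimilar:
  assumes eq: "traces N1 M1 = traces N2 M2"
  shows "weakly_bisimilar N1 M1 N2 M2"
proof -
  define R where "R = {(A, B). \<exists>s. fire_seq N1 M1 s A \<and> fire_seq N2 M2 s B}"
  have "(M1, M2) \<in> R" by (auto simp: R_def intro: fire_seq.Nil)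
  moreover have "reachable N1 M1 A \<and> reachable N2 M2 B
      \<and> (\<forall>t A'. fire N1 A t A' \<longrightarrow> (\<exists>B'. fire N2 B t B' \<and> (A', B') \<in> R))
      \<and> (\<forall>t B'. fire N2 B t B' \<longrightarrow> (\<exists>A'. fire N1 A t A' \<and> (A', B') \<in> R))"
    if "(A, B) \<in> R" for A B
  proof -
    from that obtain s where A: "fire_seq N1 M1 s A" and B: "fire_seq N2 M2 s B"
      by (auto simp: R_def)
    have "\<exists>B'. fire N2 B t B' \<and> (A', B') \<in> R" if step: "fire N1 A t A'" for t A'
    proof -
      from eq have "traces N1 M1 \<subseteq> traces N2 M2" by simp
      then obtain B' where "fire N2 B t B'"
        "fire_seq N1 M1 (s @ [t]) A'" "fire_seq N2 M2 (s @ [t]) B'"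
        using A B step by (rule step_matched_by_trace_inclusion)
      then show ?thesis by (auto simp: R_def)
    qed
    moreover have "\<exists>A'. fire N1 A t A' \<and> (A', B') \<in> R" if step: "fire N2 B t B'" for t B'
    proof -
      from eq have "traces N2 M2 \<subseteq> traces N1 M1" by simp
      then obtain A' where "fire N1 A t A'"
        "fire_seq N2 M2 (s @ [t]) B'" "fire_seq N1 M1 (s @ [t]) A'"
        using B A step by (rule step_matched_by_trace_inclusion)
      then show ?thesis by (auto simp: R_def)
    qed
    ultimately show ?thesis
      using A B by (auto simp: reachable_def)
  qed
  ultimately show ?thesis
    unfolding weakly_bisimilar_def by (intro exI[of _ R]) (auto simp: Ball_def)
qed

lemma weakly_bisimilar_iff_traces_eq:
  "weakly_bisimilar N1 M1 N2 M2 \<longleftrightarrow> traces N1 M1 = traces N2 M2"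
  using weakly_bisimilar_imp_traces_eq traces_eq_imp_weakly_bisimilar by blast

lemma lang_eq_traces_net_del:
  assumes "two_level N L H"
  shows "lang N L H M = traces (net_del N H) M"
proof -
  have "trans (net_del N H) \<subseteq> L"
    using assms by (auto simp: net_del_def two_level_def)
  then show ?thesis
    by (auto simp: lang_def traces_def dest: fire_seq_set_subset_trans)
qed

theorem proposition5:
  fixes N :: "('p,'t) ptnet" and M0 :: "'p marking" and L H :: "'t set"
  assumes "wf_net N" and "two_level N L H"
  shows "SBNDC N M0 H \<longleftrightarrow>
    (\<forall>M1 h M2. reachable N M0 M1 \<and> h \<in> H \<and> fire N M1 h M2 \<longrightarrow>
       lang N L H M1 = lang N L H M2)"
  unfolding SBNDC_def weakly_bisimilar_iff_traces_eq lang_eq_traces_net_del[OF assms(2)] ..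

end
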